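(* Let $\langle B,\wedge,{}'\rangle$ be an algebra with $\wedge$ binary and ${}'$ unary satisfying $(x\wedge y)\wedge z\approx (y\wedge z)\wedge x$ and $x\approx (x'\wedge y)'\wedge(x'\wedge y')'$. Then $x\wedge(y\wedge z)=z\wedge(y\wedge x)$ for all $x,y,z\in B$. *)

theory Defs
  imports Main
begin

end

theory Submission
  imports Defs
begin

(* The second axiom exhibits every element as a meet.  The cyclic law alone already yields
   x(yz) = z(yx) whenever x and z are meets, by a direct chain of cyclic rotations. *)

lemma cyclic_law_swap_meets:
  fixes f :: "'a \<Rightarrow> 'a \<Rightarrow> 'a"
  assumes cyc: "\<And>x y z. f (f x y) z = f (f y z) x"
  shows "f (f a b) (f y (f c d)) = f (f c d) (f y (f a b))"
proof -
  have "f (f a b) (f y (f c d)) = f (f (f y (f c d)) a) b" by (rule cyc[symmetric])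
  also have "\<dots> = f (f (f (f c d) a) y) b" by (simp only: cyc[of y "f c d" a])
  also have "\<dots> = f (f (f (f d a) c) y) b" by (simp only: cyc[of c d a])
  also have "\<dots> = f (f (f c y) (f d a)) b" by (simp only: cyc[of "f d a" c y])
  also have "\<dots> = f (f (f d a) b) (f c y)" by (rule cyc)
  also have "\<dots> = f (f (f a b) d) (f c y)" by (simp only: cyc[of d a b])
  also have "\<dots> = f (f (f c y) (f a b)) d" by (rule cyc[symmetric])
  also have "\<dots> = f (f (f y (f a b)) c) d" by (simp only: cyc[of c y "f a b"])
  also have "\<dots> = f (f c d) (f y (f a b))" by (rule cyc)
  finally show ?thesis .
qed

theorem lemma9p8:
  fixes meet :: "'b \<Rightarrow> 'b \<Rightarrow> 'b" and c :: "'b \<Rightarrow> 'b"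
  assumes ax1: "\<And>x y z. meet (meet x y) z = meet (meet y z) x"
    and ax2: "\<And>x y. x = meet (c (meet (c x) y)) (c (meet (c x) (c y)))"
  shows "\<forall>x y z. meet x (meet y z) = meet z (meet y x)"
proof (intro allI)
  fix x y z
  have every_meet: "\<exists>a b. u = meet a b" for u
    using ax2 by blast
  obtain a b where "x = meet a b" using every_meet by blast
  moreover obtain d e where "z = meet d e" using every_meet by blast
  ultimately show "meet x (meet y z) = meet z (meet y x)"
    using cyclic_law_swap_meets[of meet, OF ax1] by simp
qed

end
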